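(* Let $X$ be a nonempty metric space such that (1) every closed bounded ball in $X$ is compact, and (2) there exist $x_0\in X$ and $r>0$ such that for every $y\in X$ and every $\lambda>1$ there is a $\lambda$-bi-Lipschitz auto-homeomorphism $f$ of $X$ with $d(f(y),x_0)<r$. Then $X$ is almost-isometry unique.
   Context: For $\lambda>1$, an injection $f$ between metric spaces is $\lambda$-bi-Lipschitz if for all distinct $a,b$ in its domain, $d(f(a),f(b))<\lambda d(a,b)$ and $d(a,b)<\lambda d(f(a),f(b))$. Two metric spaces $X,Y$ are almost isometric if for every $\lambda>1$ there is a $\lambda$-bi-Lipschitz bijection (homeomorphism) from $X$ onto $Y$. A metric space $X$ is almost-isometry unique if every metric space almost isometric to $X$ is isometric to $X$. *)

theory Defs
  imports "HOL-Analysis.Analysis"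
begin

definition bi_lipschitz ::
  "real \<Rightarrow> ('a \<Rightarrow> 'b) \<Rightarrow> 'a set \<Rightarrow> ('a \<Rightarrow> 'a \<Rightarrow> real) \<Rightarrow> 'b set \<Rightarrow> ('b \<Rightarrow> 'b \<Rightarrow> real) \<Rightarrow> bool"
  where "bi_lipschitz lam f M d N e \<longleftrightarrow>
     f ` M \<subseteq> N \<and> inj_on f M \<and>
     (\<forall>a\<in>M. \<forall>b\<in>M. a \<noteq> b \<longrightarrow>
        e (f a) (f b) < lam * d a b \<and> d a b < lam * e (f a) (f b))"

definition almost_isometric ::
  "'a set \<Rightarrow> ('a \<Rightarrow> 'a \<Rightarrow> real) \<Rightarrow> 'b set \<Rightarrow> ('b \<Rightarrow> 'b \<Rightarrow> real) \<Rightarrow> bool"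
  where "almost_isometric M d N e \<longleftrightarrow>
     (\<forall>lam>1. \<exists>f. bij_betw f M N \<and>
        homeomorphic_map (Metric_space.mtopology M d) (Metric_space.mtopology N e) f \<and>
        bi_lipschitz lam f M d N e)"

definition isometric ::
  "'a set \<Rightarrow> ('a \<Rightarrow> 'a \<Rightarrow> real) \<Rightarrow> 'b set \<Rightarrow> ('b \<Rightarrow> 'b \<Rightarrow> real) \<Rightarrow> bool"
  where "isometric M d N e \<longleftrightarrow>
     (\<exists>f. bij_betw f M N \<and> (\<forall>a\<in>M. \<forall>b\<in>M. e (f a) (f b) = d a b))"

end

theory Submission
  imports Defs
begin

(* Fix y0 in N. Composing a sqrt(lam)-bi-Lipschitz bijection M -> N with a homogeneity map of M
   gives, for every lam > 1, a lam-bi-Lipschitz bijection G : N -> M moving y0 to within r of x0.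
   Such maps and their inverses send each point into a fixed closed ball, which is compact since
   M, and hence N, is proper. By Tychonoff, the pairs (G_n, G_n^-1) with constants tending to 1
   have a cluster point (g, f) for pointwise convergence. The bi-Lipschitz inequalities are closed
   conditions, so g preserves distances, and g (f x) = x makes it onto M. *)

lemma bi_lipschitz_le:
  assumes "Metric_space M d" "Metric_space N e" "bi_lipschitz lam f M d N e" "a \<in> M" "b \<in> M"
  shows "e (f a) (f b) \<le> lam * d a b" "d a b \<le> lam * e (f a) (f b)"
proof -
  have "f a \<in> N" using assms(3,4) by (auto simp: bi_lipschitz_def)
  then have "e (f a) (f b) \<le> lam * d a b \<and> d a b \<le> lam * e (f a) (f b)"
    using assms by (cases "a = b") (auto simp: bi_lipschitz_def Metric_space.mdist_zero less_eq_real_def)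
  then show "e (f a) (f b) \<le> lam * d a b" "d a b \<le> lam * e (f a) (f b)" by auto
qed

lemma bi_lipschitz_mono:
  assumes "Metric_space M d" "Metric_space N e" "bi_lipschitz lam f M d N e" "lam \<le> mu"
  shows "bi_lipschitz mu f M d N e"
  using assms unfolding bi_lipschitz_def
  by (smt (verit, best) Metric_space.nonneg mult_right_mono image_subset_iff)

lemma bi_lipschitz_inv_into:
  assumes "bij_betw f M N" "bi_lipschitz lam f M d N e"
  shows "bi_lipschitz lam (inv_into M f) N e M d"
  using assms unfolding bi_lipschitz_def bij_betw_def
  by (smt (verit, best) f_inv_into_f image_subset_iff inj_on_inv_into inv_into_into)

lemma bi_lipschitz_compose:
  assumes f: "bi_lipschitz lam f M d N e" and g: "bi_lipschitz mu g N e P c"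
    and "0 < lam" "0 < mu"
  shows "bi_lipschitz (lam * mu) (g \<circ> f) M d P c"
  unfolding bi_lipschitz_def
proof (intro conjI ballI impI)
  show "(g \<circ> f) ` M \<subseteq> P" "inj_on (g \<circ> f) M"
    using f g by (auto simp: bi_lipschitz_def intro: comp_inj_on inj_on_subset)
  fix a b assume "a \<in> M" "b \<in> M" "a \<noteq> b"
  then have "f a \<in> N" "f b \<in> N" "f a \<noteq> f b"
    and fab: "e (f a) (f b) < lam * d a b" "d a b < lam * e (f a) (f b)"
    using f by (auto simp: bi_lipschitz_def inj_on_def)
  then have gfab: "c (g (f a)) (g (f b)) < mu * e (f a) (f b)" "e (f a) (f b) < mu * c (g (f a)) (g (f b))"
    using g by (auto simp: bi_lipschitz_def)
  show "c ((g \<circ> f) a) ((g \<circ> f) b) < lam * mu * d a b"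
    using gfab(1) mult_strict_left_mono[OF fab(1) \<open>0 < mu\<close>] by (simp add: mult_ac)
  show "d a b < lam * mu * c ((g \<circ> f) a) ((g \<circ> f) b)"
    using fab(2) mult_strict_left_mono[OF gfab(2) \<open>0 < lam\<close>] by (simp add: mult_ac)
qed

text \<open>The hypotheses force \<open>lam > 1\<close> unless \<open>M\<close> has at most one point; \<open>\<bar>lam\<bar> + 1\<close> avoids that case split.\<close>

lemma bi_lipschitz_imp_continuous_map:
  assumes X: "Metric_space M d" and Y: "Metric_space N e" and f: "bi_lipschitz lam f M d N e"
  shows "continuous_map (Metric_space.mtopology M d) (Metric_space.mtopology N e) f"
  unfolding Metric_space.metric_continuous_map[OF X Y]
proof (intro conjI ballI allI impI)
  show "f ` M \<subseteq> N" using f by (simp add: bi_lipschitz_def)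
  fix a and \<epsilon> :: real assume "a \<in> M" "\<epsilon> > 0"
  show "\<exists>\<delta>>0. \<forall>x. x \<in> M \<and> d a x < \<delta> \<longrightarrow> e (f a) (f x) < \<epsilon>"
  proof (intro exI conjI allI impI)
    show "\<epsilon> / (\<bar>lam\<bar> + 1) > 0" using \<open>\<epsilon> > 0\<close> by simp
    fix x assume x: "x \<in> M \<and> d a x < \<epsilon> / (\<bar>lam\<bar> + 1)"
    have "e (f a) (f x) \<le> lam * d a x"
      using bi_lipschitz_le[OF X Y f \<open>a \<in> M\<close>] x by blast
    also have "\<dots> \<le> (\<bar>lam\<bar> + 1) * d a x"
      using Metric_space.nonneg[OF X] by (intro mult_right_mono) auto
    also have "\<dots> < \<epsilon>"
      using x by (simp add: field_simps add_pos_nonneg)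
    finally show "e (f a) (f x) < \<epsilon>" .
  qed
qed

lemma isometric_sym:
  assumes "isometric M d N e" shows "isometric N e M d"
proof -
  obtain f where f: "bij_betw f M N" "\<forall>a\<in>M. \<forall>b\<in>M. e (f a) (f b) = d a b"
    using assms by (auto simp: isometric_def)
  have "d (inv_into M f a) (inv_into M f b) = e a b" if "a \<in> N" "b \<in> N" for a b
  proof -
    have "inv_into M f a \<in> M" "inv_into M f b \<in> M" "f (inv_into M f a) = a" "f (inv_into M f b) = b"
      using f(1) that by (auto simp: bij_betw_def inv_into_into f_inv_into_f)
    then show ?thesis using f(2) by metis
  qed
  then show ?thesis
    using bij_betw_inv_into[OF f(1)] by (auto simp: isometric_def)
qed

definition proper_metric :: "'a set \<Rightarrow> ('a \<Rightarrow> 'a \<Rightarrow> real) \<Rightarrow> bool" where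
  "proper_metric M d \<longleftrightarrow>
     (\<forall>x\<in>M. \<forall>r. compactin (Metric_space.mtopology M d) (Metric_space.mcball M d x r))"

lemma proper_metric_bi_lipschitz_image:
  assumes X: "Metric_space M d" and Y: "Metric_space N e" and "proper_metric M d"
    and f: "bij_betw f M N" "bi_lipschitz lam f M d N e"
  shows "proper_metric N e"
  unfolding proper_metric_def
proof (intro ballI allI)
  interpret X: Metric_space M d by (rule X)
  interpret Y: Metric_space N e by (rule Y)
  fix y R assume "y \<in> N"
  define g where "g = inv_into M f"
  have g: "bi_lipschitz lam g N e M d" "\<And>p. p \<in> N \<Longrightarrow> g p \<in> M" "\<And>p. p \<in> N \<Longrightarrow> f (g p) = p"
    using f bi_lipschitz_inv_into[OF f] by (auto simp: g_def bij_betw_def inv_into_into f_inv_into_f)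
  define K where "K = X.mcball (g y) (\<bar>lam\<bar> * R)"
  have "Y.mcball y R \<subseteq> f ` K"
  proof
    fix p assume "p \<in> Y.mcball y R"
    then have "p \<in> N" "e y p \<le> R" by auto
    have "d (g y) (g p) \<le> lam * e y p"
      using bi_lipschitz_le[OF Y X g(1) \<open>y \<in> N\<close> \<open>p \<in> N\<close>] by blast
    also have "\<dots> \<le> \<bar>lam\<bar> * R"
      using \<open>e y p \<le> R\<close> Y.nonneg[of y p] by (metis abs_ge_self abs_ge_zero mult_mono order_trans)
    finally have "g p \<in> K" using g(2) \<open>y \<in> N\<close> \<open>p \<in> N\<close> by (simp add: K_def)
    then show "p \<in> f ` K" using g(3)[OF \<open>p \<in> N\<close>] by force
  qed
  moreover have "compactin Y.mtopology (f ` K)"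
    using assms(3) g(2)[OF \<open>y \<in> N\<close>] unfolding proper_metric_def K_def
    by (blast intro: image_compactin bi_lipschitz_imp_continuous_map[OF X Y f(2)])
  ultimately show "compactin Y.mtopology (Y.mcball y R)"
    using closed_compactin Y.closedin_mcball by blast
qed

lemma bi_lipschitz_bij_mcball_bounds:
  assumes X: "Metric_space M d" and Y: "Metric_space N e"
    and G: "bij_betw G N M" "bi_lipschitz B G N e M d" "0 \<le> B"
    and base: "x0 \<in> M" "y0 \<in> N" "d (G y0) x0 \<le> r"
  shows "\<And>p. p \<in> N \<Longrightarrow> G p \<in> Metric_space.mcball M d x0 (r + B * e y0 p)"
    and "\<And>x. x \<in> M \<Longrightarrow> inv_into N G x \<in> Metric_space.mcball N e y0 (B * (r + d x0 x))"
proof -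
  interpret X: Metric_space M d by (rule X)
  interpret Y: Metric_space N e by (rule Y)
  have GM: "G p \<in> M" if "p \<in> N" for p using G(1) that by (auto simp: bij_betw_def)
  show "G p \<in> X.mcball x0 (r + B * e y0 p)" if "p \<in> N" for p
  proof -
    have "d x0 (G p) \<le> d x0 (G y0) + d (G y0) (G p)"
      using base GM that X.triangle by blast
    also have "\<dots> \<le> r + B * e y0 p"
      using base(3) bi_lipschitz_le[OF Y X G(2) \<open>y0 \<in> N\<close> that] X.commute[of x0] by simp
    finally show ?thesis
      using base GM that by simp
  qed
  define F where "F = inv_into N G"
  have F: "bi_lipschitz B F M d N e" "\<And>x. x \<in> M \<Longrightarrow> F x \<in> N" "F (G y0) = y0"
    using bi_lipschitz_inv_into[OF G(1,2)] G(1) \<open>y0 \<in> N\<close>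
    by (auto simp: F_def bij_betw_def inv_into_into)
  show "inv_into N G x \<in> Y.mcball y0 (B * (r + d x0 x))" if "x \<in> M" for x
  proof -
    have "e y0 (F x) = e (F (G y0)) (F x)" using F by simp
    also have "\<dots> \<le> B * d (G y0) x"
      using bi_lipschitz_le[OF X Y F(1) GM[OF \<open>y0 \<in> N\<close>] that] by blast
    also have "\<dots> \<le> B * (r + d x0 x)"
      using base X.triangle[of "G y0" x0 x] GM that \<open>0 \<le> B\<close>
      by (intro mult_left_mono) auto
    finally show ?thesis
      using \<open>y0 \<in> N\<close> F(2) that by (simp add: F_def)
  qed
qed

text \<open>For \<open>s\<close> in \<open>topspace X\<close> this is equivalent to the usual condition that every neighbourhood
  of \<open>z\<close> contains \<open>s n\<close> for infinitely many \<open>n\<close>.\<close>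

definition seq_cluster_point :: "'a topology \<Rightarrow> (nat \<Rightarrow> 'a) \<Rightarrow> 'a \<Rightarrow> bool" where
  "seq_cluster_point X s z \<longleftrightarrow>
     z \<in> topspace X \<and> (\<forall>C. closedin X C \<longrightarrow> (\<forall>\<^sub>F n in sequentially. s n \<in> C) \<longrightarrow> z \<in> C)"

lemma compactin_imp_seq_cluster_point:
  assumes "compactin X K" "\<And>n. s n \<in> K"
  shows "\<exists>z\<in>K. seq_cluster_point X s z"
proof -
  let ?K = "subtopology X K"
  define T where "T k = ?K closure_of (s ` {k..})" for k
  have "s ` {k..} \<subseteq> T k" for k
    using assms compactin_subset_topspace unfolding T_def
    by (intro closure_of_subset) auto
  then have "(\<Inter>k. T k) \<noteq> {}"
  proof (intro compact_space_imp_nest)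
    show "compact_space ?K" using assms(1) by (rule compact_space_subtopology)
  qed (auto simp: T_def decseq_def intro!: closure_of_mono)
  then obtain z where z: "\<And>k. z \<in> T k" by blast
  have "z \<in> K" using z[of 0] closure_of_subset_topspace unfolding T_def by fastforce
  moreover have "z \<in> C" if "closedin X C" and ev: "\<forall>\<^sub>F n in sequentially. s n \<in> C" for C
  proof -
    obtain k where "\<forall>n\<ge>k. s n \<in> C" using ev by (auto simp: eventually_sequentially)
    then have "T k \<subseteq> K \<inter> C"
      unfolding T_def using assms(2) \<open>closedin X C\<close>
      by (intro closure_of_minimal closedin_subtopology_Int_closed) auto
    then show "z \<in> C" using z by blast
  qed
  ultimately show ?thesis
    using compactin_subset_topspace[OF assms(1)] unfolding seq_cluster_point_def by blast
qed

lemma closedin_continuous_maps_le: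
  assumes "continuous_map X euclideanreal f" "continuous_map X euclideanreal g"
  shows "closedin X {x \<in> topspace X. f x \<le> g x}"
  using closedin_continuous_map_preimage[OF continuous_map_diff[OF assms], of "{..0}"]
  by simp

lemma seq_cluster_point_le:
  assumes "seq_cluster_point X s z" "\<And>n. s n \<in> topspace X"
    and "continuous_map X euclideanreal f" "continuous_map X euclideanreal g"
    and "\<forall>\<^sub>F n in sequentially. f (s n) \<le> g (s n)"
  shows "f z \<le> g z"
proof -
  have "\<forall>\<^sub>F n in sequentially. s n \<in> {x \<in> topspace X. f x \<le> g x}"
    using assms(2,5) by (auto elim: eventually_mono)
  then show ?thesis
    using assms(1) closedin_continuous_maps_le[OF assms(3,4)] by (auto simp: seq_cluster_point_def)
qed

lemma (in Metric_space) continuous_map_mdist_pair: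
  assumes "continuous_map X mtopology f" "continuous_map X mtopology g"
  shows "continuous_map X euclideanreal (\<lambda>x. d (f x) (g x))"
  using continuous_map_mdist[of X "metric (M, d)" f g] assms by simp

definition maps_pair_topology ::
  "'a set \<Rightarrow> ('a \<Rightarrow> 'a \<Rightarrow> real) \<Rightarrow> 'b set \<Rightarrow> ('b \<Rightarrow> 'b \<Rightarrow> real) \<Rightarrow> (('b \<Rightarrow> 'a) \<times> ('a \<Rightarrow> 'b)) topology"
  where "maps_pair_topology M d N e =
    prod_topology (product_topology (\<lambda>_. Metric_space.mtopology M d) N)
                  (product_topology (\<lambda>_. Metric_space.mtopology N e) M)"

definition with_inverse :: "'b set \<Rightarrow> 'a set \<Rightarrow> ('b \<Rightarrow> 'a) \<Rightarrow> ('b \<Rightarrow> 'a) \<times> ('a \<Rightarrow> 'b)" where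
  "with_inverse N M G = (restrict G N, restrict (inv_into N G) M)"

lemma topspace_maps_pair_topology:
  assumes "Metric_space M d" "Metric_space N e"
  shows "topspace (maps_pair_topology M d N e) = (N \<rightarrow>\<^sub>E M) \<times> (M \<rightarrow>\<^sub>E N)"
  using assms by (simp add: maps_pair_topology_def Metric_space.topspace_mtopology)

lemma with_inverse_in_topspace:
  assumes "Metric_space M d" "Metric_space N e" "bij_betw G N M"
  shows "with_inverse N M G \<in> topspace (maps_pair_topology M d N e)"
  using assms by (auto simp: topspace_maps_pair_topology with_inverse_def bij_betw_def inv_into_into)

lemma continuous_map_maps_pair_fst_apply:
  "p \<in> N \<Longrightarrow> continuous_map (maps_pair_topology M d N e) (Metric_space.mtopology M d) (\<lambda>w. fst w p)"
  using continuous_map_compose[OF continuous_map_fst continuous_map_product_projection]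
  by (simp add: maps_pair_topology_def o_def)

lemma continuous_map_maps_pair_snd_apply:
  "x \<in> M \<Longrightarrow> continuous_map (maps_pair_topology M d N e) (Metric_space.mtopology N e) (\<lambda>w. snd w x)"
  using continuous_map_compose[OF continuous_map_snd continuous_map_product_projection]
  by (simp add: maps_pair_topology_def o_def)

lemma seq_cluster_point_of_bi_lipschitz_bijs:
  assumes X: "Metric_space M d" and Y: "Metric_space N e"
    and proper: "proper_metric M d" "proper_metric N e" and base: "x0 \<in> M" "y0 \<in> N"
    and G: "\<And>n. bij_betw (G n) N M" "\<And>n. bi_lipschitz B (G n) N e M d" "\<And>n. d (G n y0) x0 \<le> r"
    and "0 \<le> B"
  shows "\<exists>z. seq_cluster_point (maps_pair_topology M d N e) (\<lambda>n. with_inverse N M (G n)) z"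
proof -
  define KM where "KM p = Metric_space.mcball M d x0 (r + B * e y0 p)" for p
  define KN where "KN x = Metric_space.mcball N e y0 (B * (r + d x0 x))" for x
  have "with_inverse N M (G n) \<in> PiE N KM \<times> PiE M KN" for n
    using bi_lipschitz_bij_mcball_bounds[OF X Y G(1,2)[of n] \<open>0 \<le> B\<close> base G(3)[of n]]
    by (auto simp: with_inverse_def KM_def KN_def)
  moreover have "compactin (Metric_space.mtopology M d) (KM p)"
    "compactin (Metric_space.mtopology N e) (KN x)" for p x
    using proper base by (simp_all add: proper_metric_def KM_def KN_def)
  then have "compactin (maps_pair_topology M d N e) (PiE N KM \<times> PiE M KN)"
    by (simp add: maps_pair_topology_def compactin_Times compactin_PiE)
  ultimately show ?thesis
    using compactin_imp_seq_cluster_point[where s = "\<lambda>n. with_inverse N M (G n)"] by blast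
qed

lemma isometry_at_seq_cluster_point:
  assumes X: "Metric_space M d" and Y: "Metric_space N e"
    and G: "\<And>n. bij_betw (G n) N M" "\<And>n. bi_lipschitz (L n) (G n) N e M d"
    and L: "decseq L" "L \<longlonglongrightarrow> 1"
    and gf: "seq_cluster_point (maps_pair_topology M d N e) (\<lambda>n. with_inverse N M (G n)) (g, f)"
    and "p \<in> N" "q \<in> N"
  shows "d (g p) (g q) = e p q"
proof -
  let ?T = "maps_pair_topology M d N e"
  have dist_cont: "continuous_map ?T euclideanreal (\<lambda>w. d (fst w p) (fst w q))"
    using Metric_space.continuous_map_mdist_pair[OF X
        continuous_map_maps_pair_fst_apply[OF \<open>p \<in> N\<close>, where M = M and d = d and e = e]
        continuous_map_maps_pair_fst_apply[OF \<open>q \<in> N\<close>, where M = M and d = d and e = e]] .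
  have G_le: "d (G n p) (G n q) \<le> L k * e p q" "e p q \<le> L k * d (G n p) (G n q)" if "k \<le> n" for k n
    using bi_lipschitz_le[OF Y X bi_lipschitz_mono[OF Y X G(2) decseqD[OF L(1) that]] \<open>p \<in> N\<close> \<open>q \<in> N\<close>]
    by auto
  have "d (g p) (g q) \<le> L k * e p q" for k
  proof -
    have "\<forall>\<^sub>F n in sequentially. d (G n p) (G n q) \<le> L k * e p q"
      using G_le(1) by (auto intro: eventually_sequentiallyI[of k])
    then show ?thesis
      using seq_cluster_point_le[OF gf with_inverse_in_topspace[OF X Y G(1)] dist_cont,
          of "\<lambda>_. L k * e p q"] \<open>p \<in> N\<close> \<open>q \<in> N\<close>
      by (simp add: with_inverse_def)
  qed
  then have "d (g p) (g q) \<le> e p q"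
    using LIMSEQ_le_const[OF tendsto_mult_right[OF L(2), of "e p q"]] by auto
  moreover have "e p q \<le> L k * d (g p) (g q)" for k
  proof -
    have "\<forall>\<^sub>F n in sequentially. e p q \<le> L k * d (G n p) (G n q)"
      using G_le(2) by (auto intro: eventually_sequentiallyI[of k])
    then show ?thesis
      using seq_cluster_point_le[OF gf with_inverse_in_topspace[OF X Y G(1)] _
          continuous_map_real_mult_left[OF dist_cont], of "\<lambda>_. e p q"] \<open>p \<in> N\<close> \<open>q \<in> N\<close>
      by (simp add: with_inverse_def)
  qed
  then have "e p q \<le> d (g p) (g q)"
    using LIMSEQ_le_const[OF tendsto_mult_right[OF L(2), of "d (g p) (g q)"]] by auto
  ultimately show ?thesis by (rule antisym)
qed

text \<open>Passing \<open>G n (inv_into N (G n) x) = x\<close> to the limit needs equicontinuity: it is the uniform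
  bi-Lipschitz bound that controls \<open>G n\<close> near the limit point \<open>f x\<close>.\<close>

lemma right_inverse_at_seq_cluster_point:
  assumes X: "Metric_space M d" and Y: "Metric_space N e"
    and G: "\<And>n. bij_betw (G n) N M" "\<And>n. bi_lipschitz B (G n) N e M d"
    and gf: "seq_cluster_point (maps_pair_topology M d N e) (\<lambda>n. with_inverse N M (G n)) (g, f)"
    and "x \<in> M"
  shows "g (f x) = x"
proof -
  let ?T = "maps_pair_topology M d N e"
  define F where "F n = inv_into N (G n)" for n
  have GF: "G n (F n x) = x" "F n x \<in> N" for n
    using G(1)[of n] \<open>x \<in> M\<close> by (auto simp: F_def bij_betw_def f_inv_into_f inv_into_into)
  have fx: "f x \<in> N" and gfx: "g (f x) \<in> M"
    using gf \<open>x \<in> M\<close> by (auto simp: seq_cluster_point_def topspace_maps_pair_topology[OF X Y] PiE_iff)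
  have "d (G n (f x)) x \<le> B * e (f x) (F n x)" for n
    using bi_lipschitz_le(1)[OF Y X G(2)[of n] fx GF(2)[of n]] GF(1)[of n] by simp
  moreover have "continuous_map ?T euclideanreal (\<lambda>w. d (fst w (f x)) x)"
    using Metric_space.continuous_map_mdist_pair[OF X
        continuous_map_maps_pair_fst_apply[OF fx, where M = M and d = d and e = e], where g = "\<lambda>_. x"] \<open>x \<in> M\<close> X by (simp add: Metric_space.topspace_mtopology)
  moreover have "continuous_map ?T euclideanreal (\<lambda>w. B * e (f x) (snd w x))"
    using Metric_space.continuous_map_mdist_pair[OF Y _
        continuous_map_maps_pair_snd_apply[OF \<open>x \<in> M\<close>, where N = N and d = d and e = e],
        where f = "\<lambda>_. f x"] fx Y
    by (simp add: Metric_space.topspace_mtopology continuous_map_real_mult_left)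
  ultimately have "d (g (f x)) x \<le> B * e (f x) (f x)"
    using seq_cluster_point_le[OF gf with_inverse_in_topspace[OF X Y G(1)],
        of "\<lambda>w. d (fst w (f x)) x" "\<lambda>w. B * e (f x) (snd w x)"] fx \<open>x \<in> M\<close>
    by (simp add: with_inverse_def F_def)
  then have "d (g (f x)) x = 0"
    using Metric_space.nonneg[OF X, of "g (f x)" x] Metric_space.mdist_zero[OF Y fx] by simp
  then show ?thesis
    using Metric_space.zero[OF X gfx \<open>x \<in> M\<close>] by simp
qed

lemma isometric_of_seq_cluster_point:
  assumes X: "Metric_space M d" and Y: "Metric_space N e"
    and G: "\<And>n. bij_betw (G n) N M" "\<And>n. bi_lipschitz (L n) (G n) N e M d"
    and L: "decseq L" "L \<longlonglongrightarrow> 1"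
    and gf: "seq_cluster_point (maps_pair_topology M d N e) (\<lambda>n. with_inverse N M (G n)) (g, f)"
  shows "isometric N e M d"
proof -
  have "bi_lipschitz (L 0) (G n) N e M d" for n
    using bi_lipschitz_mono[OF Y X G(2) decseqD[OF L(1)]] by blast
  note iso = isometry_at_seq_cluster_point[OF X Y G L gf]
    and inverse = right_inverse_at_seq_cluster_point[OF X Y G(1) this gf]
  have maps: "g \<in> N \<rightarrow> M" "f \<in> M \<rightarrow> N"
    using gf by (auto simp: seq_cluster_point_def topspace_maps_pair_topology[OF X Y])
  have "inj_on g N"
    using iso maps by (intro inj_onI) (metis Metric_space.zero[OF Y])
  moreover have "g ` N = M"
    using maps inverse by (force simp: Pi_iff)
  ultimately show ?thesis
    using iso by (auto simp: isometric_def bij_betw_def)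
qed

lemma isometric_if_pointed_almost_isometric:
  assumes X: "Metric_space M d" and Y: "Metric_space N e"
    and proper: "proper_metric M d" "proper_metric N e" and base: "x0 \<in> M" "y0 \<in> N"
    and approx: "\<And>lam. lam > 1 \<Longrightarrow> \<exists>G. bij_betw G N M \<and> bi_lipschitz lam G N e M d \<and> d (G y0) x0 \<le> r"
  shows "isometric N e M d"
proof -
  define L where "L n = 1 + inverse (real (Suc n))" for n
  have "decseq L"
    by (auto simp: L_def intro!: decseq_SucI le_imp_inverse_le)
  moreover have "L \<longlonglongrightarrow> 1"
    using LIMSEQ_inverse_real_of_nat_add[of 1] by (simp only: L_def[abs_def])
  ultimately have L: "decseq L" "L \<longlonglongrightarrow> 1" .
  have L_bounds: "1 < L n" "L n \<le> 2" for n
    by (auto simp: L_def inverse_le_1_iff)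
  have "\<forall>n. \<exists>G. bij_betw G N M \<and> bi_lipschitz (L n) G N e M d \<and> d (G y0) x0 \<le> r"
    using approx L_bounds(1) by blast
  then obtain G where "\<forall>n. bij_betw (G n) N M \<and> bi_lipschitz (L n) (G n) N e M d \<and> d (G n y0) x0 \<le> r"
    by (rule choice[THEN exE])
  then have G: "\<And>n. bij_betw (G n) N M" "\<And>n. bi_lipschitz (L n) (G n) N e M d"
    "\<And>n. d (G n y0) x0 \<le> r"
    by auto
  have "bi_lipschitz 2 (G n) N e M d" for n
    using bi_lipschitz_mono[OF Y X G(2) L_bounds(2)] .
  then obtain z where "seq_cluster_point (maps_pair_topology M d N e) (\<lambda>n. with_inverse N M (G n)) z"
    using seq_cluster_point_of_bi_lipschitz_bijs[OF X Y proper base G(1) _ G(3)] by force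
  then show ?thesis
    using isometric_of_seq_cluster_point[OF X Y G(1,2) L] by (cases z) blast
qed

lemma bi_lipschitz_bij_near_base_point:
  assumes ai: "almost_isometric M d N e"
    and homog: "\<forall>y\<in>M. \<forall>lam>1. \<exists>h. bij_betw h M M \<and> bi_lipschitz lam h M d M d \<and> d (h y) x0 < r"
    and "y0 \<in> N" "lam > 1"
  obtains G where "bij_betw G N M" "bi_lipschitz lam G N e M d" "d (G y0) x0 < r"
proof -
  define mu where "mu = sqrt lam"
  have mu: "mu > 1" "mu * mu = lam" using \<open>lam > 1\<close> by (auto simp: mu_def)
  obtain g where g: "bij_betw g M N" "bi_lipschitz mu g M d N e"
    using ai mu(1) by (auto simp: almost_isometric_def)
  define x1 where "x1 = inv_into M g y0"
  have "x1 \<in> M" using g(1) \<open>y0 \<in> N\<close> by (auto simp: x1_def bij_betw_def inv_into_into)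
  then obtain h where h: "bij_betw h M M" "bi_lipschitz mu h M d M d" "d (h x1) x0 < r"
    using homog mu(1) by blast
  show thesis
  proof
    show "bij_betw (h \<circ> inv_into M g) N M"
      using bij_betw_inv_into[OF g(1)] h(1) by (rule bij_betw_trans)
    show "bi_lipschitz lam (h \<circ> inv_into M g) N e M d"
      using bi_lipschitz_compose[OF bi_lipschitz_inv_into[OF g] h(2)] mu by simp
    show "d ((h \<circ> inv_into M g) y0) x0 < r"
      using h(3) by (simp add: x1_def)
  qed
qed

theorem theorem3p1:
  fixes M :: "'a set" and d :: "'a \<Rightarrow> 'a \<Rightarrow> real"
    and N :: "'b set" and e :: "'b \<Rightarrow> 'b \<Rightarrow> real"
  assumes X: "Metric_space M d" and ne: "M \<noteq> {}"
    and proper: "\<And>x r. x \<in> M \<Longrightarrow>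
       compactin (Metric_space.mtopology M d) (Metric_space.mcball M d x r)"
    and homog: "\<exists>x0\<in>M. \<exists>r>0. \<forall>y\<in>M. \<forall>lam>1. \<exists>f.
       bij_betw f M M \<and>
       homeomorphic_map (Metric_space.mtopology M d) (Metric_space.mtopology M d) f \<and>
       bi_lipschitz lam f M d M d \<and> d (f y) x0 < r"
    and Y: "Metric_space N e"
    and ai: "almost_isometric M d N e"
  shows "isometric M d N e"
proof -
  obtain x0 r where "x0 \<in> M"
    and homog': "\<forall>y\<in>M. \<forall>lam>1. \<exists>h. bij_betw h M M \<and> bi_lipschitz lam h M d M d \<and> d (h y) x0 < r"
    using homog by blast
  have "(1::real) < 2" by simp
  then obtain F where F: "bij_betw F M N" "bi_lipschitz 2 F M d N e"
    using ai unfolding almost_isometric_def by blast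
  then obtain y0 where "y0 \<in> N"
    using ne by (auto simp: bij_betw_def)
  have "proper_metric M d"
    using proper by (simp add: proper_metric_def)
  moreover have "proper_metric N e"
    using proper_metric_bi_lipschitz_image[OF X Y \<open>proper_metric M d\<close> F] .
  moreover have "\<exists>G. bij_betw G N M \<and> bi_lipschitz lam G N e M d \<and> d (G y0) x0 \<le> r"
    if lam: "lam > 1" for lam
  proof -
    obtain G where "bij_betw G N M" "bi_lipschitz lam G N e M d" "d (G y0) x0 < r"
      using bi_lipschitz_bij_near_base_point[OF ai homog' \<open>y0 \<in> N\<close> lam] by blast
    then show ?thesis by (intro exI[of _ G]) auto
  qed
  ultimately have "isometric N e M d"
    using isometric_if_pointed_almost_isometric[OF X Y _ _ \<open>x0 \<in> M\<close> \<open>y0 \<in> N\<close>] by blast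
  then show ?thesis
    by (rule isometric_sym)
qed

end
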